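(* Let $\mathbf P^w=T^{-1}\big(T_0(\mathbf P_{\boldsymbol\Lambda^{(0)}_w}+\mathbf P_{\boldsymbol\Lambda^{(0)}_s})+\sum_{k\in\mathcal A}T_k(\mathbf P_{\boldsymbol\Lambda^{(k)}_{\mathcal T}}+\mathbf P_{\boldsymbol\Lambda^{(k)}_{\mathcal T^c}})\big)$ with $T=T_0+\sum_{k\in\mathcal A}T_k$, and suppose (A5) of the context holds. Then there is a positive constant $C$ independent of $N$ and $T$ such that $|\lambda_j(\mathbf P^w)-1|\le C\varepsilon$ for all $j\in[s]$, and $\lambda_{s+1}(\mathbf P^w)\le1-\kappa+C\varepsilon$.
   Context: $\mathbf P_{\mathbf A}=\mathbf A(\mathbf A^\top\mathbf A)^{-1}\mathbf A^\top$ denotes orthogonal projection onto the column space of a full-column-rank $\mathbf A$. $\boldsymbol\Lambda^{(0)}_w\in\mathbb R^{N\times s}$ and $\boldsymbol\Lambda^{(0)}_s\in\mathbb R^{N\times(r_0-s)}$ are the weak and strong loading blocks of the target loading matrix, with orthogonal column spaces; for each $k$ in a finite index set $\mathcal A$, $\boldsymbol\Lambda^{(k)}_{\mathcal T}\in\mathbb R^{N\times s}$ and $\boldsymbol\Lambda^{(k)}_{\mathcal T^c}\in\mathbb R^{N\times (r_k-s)}$ are the two column blocks of the source loading matrix $\boldsymbol\Lambda^{(k)}$, with orthogonal column spaces. $T_0,T_k$ are positive sample sizes. $\lambda_j(\cdot)$ is the $j$-th largest eigenvalue, $\|\cdot\|$ spectral norm, $\|\cdot\|_F$ Frobenius norm.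 (A5): $\|\mathbf P_{\boldsymbol\Lambda^{(k)}_{\mathcal T}}-\mathbf P_{\boldsymbol\Lambda^{(0)}_w}\|_F\le\varepsilon$ for all $k\in\mathcal A$, and there is a constant $\kappa>0$ with $T^{-1}\|T_0\mathbf P_{\boldsymbol\Lambda^{(0)}_s}+\sum_{k\in\mathcal A}T_k\mathbf P_{\boldsymbol\Lambda^{(k)}_{\mathcal T^c}}\|\le1-\kappa$. *)

theory Defs
  imports "Jordan_Normal_Form.Gauss_Jordan_Elimination" "Jordan_Normal_Form.DL_Rank"
    "Jordan_Normal_Form.Char_Poly" "HOL-Library.Multiset"
begin

definition full_col_rank :: "real mat \<Rightarrow> bool" where
  "full_col_rank A \<longleftrightarrow> vec_space.rank (dim_row A) A = dim_col A"

definition proj :: "real mat \<Rightarrow> real mat" where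
  "proj A = A * the (mat_inverse (A\<^sup>T * A)) * A\<^sup>T"

definition vnorm :: "real vec \<Rightarrow> real" where
  "vnorm v = sqrt (v \<bullet> v)"

definition spec_norm :: "real mat \<Rightarrow> real" where
  "spec_norm A = Sup {vnorm (A *\<^sub>v v) | v. v \<in> carrier_vec (dim_col A) \<and> vnorm v \<le> 1}"

definition frob_norm :: "real mat \<Rightarrow> real" where
  "frob_norm A = sqrt (\<Sum>i<dim_row A. \<Sum>j<dim_col A. (A $$ (i,j))\<^sup>2)"

definition eigs_desc :: "real mat \<Rightarrow> real list" where
  "eigs_desc A = rev (sorted_list_of_multiset (proots (char_poly A)))"

definition lambda :: "nat \<Rightarrow> real mat \<Rightarrow> real" where
  "lambda j A = eigs_desc A ! (j - 1)"

definition wsum :: "nat \<Rightarrow> 'k set \<Rightarrow> ('k \<Rightarrow> real) \<Rightarrow> ('k \<Rightarrow> real mat) \<Rightarrow> real mat" where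
  "wsum N A c M = mat N N (\<lambda>(i,j). \<Sum>k\<in>A. c k * (M k $$ (i,j)))"

end

theory Submission
  imports Defs "Jordan_Normal_Form.Schur_Decomposition"
begin

(* C = 1 works.  Pw is a convex combination of the orthogonal projections P_w^(0) + P_s^(0)
   and P_T^(k) + P_Tc^(k), so its quadratic form is at most |x|^2.  On the column space of
   Lambda_w^(0), where P_w^(0) is the identity, each P_T^(k) has quadratic form at least
   (1 - eps)|x|^2 because ||P_T^(k) - P_w^(0)||_F <= eps; on the orthogonal complement, where
   P_w^(0) vanishes, the P_T^(k) contribute at most eps|x|^2 and the strong part at most
   (1 - kappa)|x|^2 by (A5).  By the spectral theorem for real symmetric matrices, a lower bound
   c|x|^2 on an s-dimensional subspace forces s eigenvalues >= c, and an upper bound c|x|^2 on the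
   orthogonal complement of an s-dimensional subspace leaves at most s eigenvalues > c
   (Courant-Fischer). *)

section \<open>Norms and quadratic forms\<close>

lemma sum_product_square_le:
  fixes a b :: "'i \<Rightarrow> real"
  shows "(\<Sum>i\<in>I. a i * b i)\<^sup>2 \<le> (\<Sum>i\<in>I. (a i)\<^sup>2) * (\<Sum>i\<in>I. (b i)\<^sup>2)"
proof -
  \<comment> \<open>Lagrange's identity\<close>
  have "0 \<le> (\<Sum>i\<in>I. \<Sum>j\<in>I. (a i * b j - a j * b i)\<^sup>2)" by (intro sum_nonneg) auto
  also have "\<dots> = (\<Sum>i\<in>I. \<Sum>j\<in>I. (a i)\<^sup>2 * (b j)\<^sup>2 + (a j)\<^sup>2 * (b i)\<^sup>2 - 2 * ((a i * b i) * (a j * b j)))"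
    by (intro sum.cong refl) (simp add: power2_eq_square algebra_simps)
  also have "\<dots> = (\<Sum>i\<in>I. \<Sum>j\<in>I. (a i)\<^sup>2 * (b j)\<^sup>2) + (\<Sum>i\<in>I. \<Sum>j\<in>I. (a j)\<^sup>2 * (b i)\<^sup>2)
      - 2 * (\<Sum>i\<in>I. \<Sum>j\<in>I. (a i * b i) * (a j * b j))"
    by (simp add: sum.distrib sum_subtractf sum_distrib_left)
  also have "(\<Sum>i\<in>I. \<Sum>j\<in>I. (a i)\<^sup>2 * (b j)\<^sup>2) = (\<Sum>i\<in>I. (a i)\<^sup>2) * (\<Sum>i\<in>I. (b i)\<^sup>2)"
    by (simp add: sum_product)
  also have "(\<Sum>i\<in>I. \<Sum>j\<in>I. (a j)\<^sup>2 * (b i)\<^sup>2) = (\<Sum>i\<in>I. (a i)\<^sup>2) * (\<Sum>i\<in>I. (b i)\<^sup>2)"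
    by (subst sum.swap) (simp add: sum_product mult.commute)
  also have "(\<Sum>i\<in>I. \<Sum>j\<in>I. (a i * b i) * (a j * b j)) = (\<Sum>i\<in>I. a i * b i)\<^sup>2"
    by (simp add: sum_product power2_eq_square)
  finally show ?thesis by simp
qed

lemma scalar_prod_eq_sum:
  "x \<in> carrier_vec n \<Longrightarrow> y \<in> carrier_vec n \<Longrightarrow> x \<bullet> y = (\<Sum>i<n. x $ i * y $ i)"
  unfolding scalar_prod_def by (auto intro: sum.cong simp: lessThan_atLeast0)

lemma scalar_prod_self_nonneg: "0 \<le> (x :: real vec) \<bullet> x"
  using conjugate_square_ge_0_vec[of x] by simp

lemma scalar_prod_self_eq_0_iff: "(x :: real vec) \<in> carrier_vec n \<Longrightarrow> x \<bullet> x = 0 \<longleftrightarrow> x = 0\<^sub>v n"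
  using conjugate_square_eq_0_vec[of x n] by simp

lemma mult_mat_vec_zero: "A \<in> carrier_mat n m \<Longrightarrow> A *\<^sub>v 0\<^sub>v m = 0\<^sub>v n"
  by (intro eq_vecI) auto

lemma vnorm_nonneg: "0 \<le> vnorm x"
  unfolding vnorm_def using scalar_prod_self_nonneg[of x] by simp

lemma vnorm_square: "(vnorm x)\<^sup>2 = x \<bullet> x"
  unfolding vnorm_def using scalar_prod_self_nonneg[of x] by simp

lemma abs_scalar_prod_le_vnorm:
  assumes "x \<in> carrier_vec n" "y \<in> carrier_vec n"
  shows "\<bar>x \<bullet> y\<bar> \<le> vnorm x * vnorm y"
proof -
  have "(x \<bullet> y)\<^sup>2 \<le> (x \<bullet> x) * (y \<bullet> y)"
    using sum_product_square_le[of "\<lambda>i. x $ i" "\<lambda>i. y $ i" "{..<n}"] assms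
    by (simp add: scalar_prod_eq_sum[of _ n] power2_eq_square)
  also have "\<dots> = (vnorm x * vnorm y)\<^sup>2" by (simp add: power_mult_distrib vnorm_square)
  finally show ?thesis using vnorm_nonneg by (simp add: power2_le_iff_abs_le)
qed

lemma frob_norm_nonneg: "0 \<le> frob_norm M"
  unfolding frob_norm_def by (auto intro!: sum_nonneg)

lemma vnorm_mult_mat_vec_le_frob_norm:
  assumes M: "M \<in> carrier_mat n m" and v: "v \<in> carrier_vec m"
  shows "vnorm (M *\<^sub>v v) \<le> frob_norm M * vnorm v"
proof -
  have Mv: "M *\<^sub>v v \<in> carrier_vec n" using M v by simp
  have "(M *\<^sub>v v) \<bullet> (M *\<^sub>v v) = (\<Sum>i<n. (row M i \<bullet> v)\<^sup>2)"
    using M by (simp add: scalar_prod_eq_sum[OF Mv Mv] power2_eq_square)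
  also have "\<dots> \<le> (\<Sum>i<n. (\<Sum>j<m. (M $$ (i,j))\<^sup>2) * (\<Sum>j<m. (v $ j)\<^sup>2))"
    using M v sum_product_square_le by (intro sum_mono) (simp add: scalar_prod_eq_sum[of _ m])
  also have "\<dots> = (frob_norm M)\<^sup>2 * (vnorm v)\<^sup>2"
    unfolding frob_norm_def vnorm_square using M v
    by (simp add: sum_distrib_right scalar_prod_eq_sum[of v m v] power2_eq_square sum_nonneg)
  finally have "(vnorm (M *\<^sub>v v))\<^sup>2 \<le> (frob_norm M * vnorm v)\<^sup>2"
    by (simp add: vnorm_square power_mult_distrib)
  thus ?thesis using vnorm_nonneg frob_norm_nonneg by (simp add: power2_le_iff_abs_le)
qed

lemma vnorm_mult_mat_vec_le_spec_norm:
  assumes M: "M \<in> carrier_mat n m" and v: "v \<in> carrier_vec m"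
  shows "vnorm (M *\<^sub>v v) \<le> spec_norm M * vnorm v"
proof -
  have bdd: "bdd_above {vnorm (M *\<^sub>v w) | w. w \<in> carrier_vec (dim_col M) \<and> vnorm w \<le> 1}"
  proof (rule bdd_aboveI)
    fix y assume "y \<in> {vnorm (M *\<^sub>v w) | w. w \<in> carrier_vec (dim_col M) \<and> vnorm w \<le> 1}"
    then obtain w where y: "y = vnorm (M *\<^sub>v w)" and w: "w \<in> carrier_vec m" "vnorm w \<le> 1"
      using M by auto
    have "y \<le> frob_norm M * vnorm w" using vnorm_mult_mat_vec_le_frob_norm[OF M w(1)] y by simp
    also have "\<dots> \<le> frob_norm M" using w(2) frob_norm_nonneg by (simp add: mult_left_le)
    finally show "y \<le> frob_norm M" .
  qed
  have unit_ball: "vnorm (M *\<^sub>v w) \<le> spec_norm M" if "w \<in> carrier_vec m" "vnorm w \<le> 1" for w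
    unfolding spec_norm_def by (rule cSup_upper[OF _ bdd]) (use that M in auto)
  show ?thesis
  proof (cases "vnorm v = 0")
    case True
    then have "v = 0\<^sub>v m" using v vnorm_square[of v] scalar_prod_self_eq_0_iff by auto
    then show ?thesis using M True by (simp add: mult_mat_vec_zero vnorm_def)
  next
    case False
    then have pos: "vnorm v > 0" using vnorm_nonneg[of v] by simp
    have "vnorm ((1 / vnorm v) \<cdot>\<^sub>v v) = 1"
      using pos unfolding vnorm_def by (simp add: real_sqrt_mult real_sqrt_divide)
    then have "vnorm ((1 / vnorm v) \<cdot>\<^sub>v (M *\<^sub>v v)) \<le> spec_norm M"
      using unit_ball[of "(1 / vnorm v) \<cdot>\<^sub>v v"] M v by (simp add: mult_mat_vec)
    moreover have "vnorm ((1 / vnorm v) \<cdot>\<^sub>v (M *\<^sub>v v)) = vnorm (M *\<^sub>v v) / vnorm v"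
      using pos unfolding vnorm_def by (simp add: real_sqrt_mult real_sqrt_divide)
    ultimately show ?thesis using pos by (simp add: divide_le_eq)
  qed
qed

lemma quadratic_form_eq_sum:
  fixes M :: "real mat"
  assumes M: "M \<in> carrier_mat n n" and x: "x \<in> carrier_vec n"
  shows "x \<bullet> (M *\<^sub>v x) = (\<Sum>i<n. \<Sum>j<n. x $ i * M $$ (i,j) * x $ j)"
  using M x by (simp add: scalar_prod_eq_sum[of _ n] sum_distrib_left mult.assoc)

lemma quadratic_form_add:
  fixes M M' :: "real mat"
  assumes "M \<in> carrier_mat n n" "M' \<in> carrier_mat n n" "x \<in> carrier_vec n"
  shows "x \<bullet> ((M + M') *\<^sub>v x) = x \<bullet> (M *\<^sub>v x) + x \<bullet> (M' *\<^sub>v x)"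
  using assms by (simp add: add_mult_distrib_mat_vec[of _ n n] scalar_prod_add_distrib[of _ n])

lemma quadratic_form_diff:
  fixes M M' :: "real mat"
  assumes "M \<in> carrier_mat n n" "M' \<in> carrier_mat n n" "x \<in> carrier_vec n"
  shows "x \<bullet> ((M - M') *\<^sub>v x) = x \<bullet> (M *\<^sub>v x) - x \<bullet> (M' *\<^sub>v x)"
  using assms by (simp add: minus_mult_distrib_mat_vec[of _ n n] scalar_prod_minus_distrib[of _ n])

lemma quadratic_form_smult:
  fixes M :: "real mat"
  assumes "M \<in> carrier_mat n n" "x \<in> carrier_vec n"
  shows "x \<bullet> ((a \<cdot>\<^sub>m M) *\<^sub>v x) = a * (x \<bullet> (M *\<^sub>v x))"
  using assms by (simp add: quadratic_form_eq_sum[of _ n] sum_distrib_left mult_ac)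

lemma wsum_carrier: "wsum N A c M \<in> carrier_mat N N"
  unfolding wsum_def by simp

lemma quadratic_form_wsum:
  assumes A: "finite A" and M: "\<And>k. k \<in> A \<Longrightarrow> M k \<in> carrier_mat N N" and x: "x \<in> carrier_vec N"
  shows "x \<bullet> (wsum N A c M *\<^sub>v x) = (\<Sum>k\<in>A. c k * (x \<bullet> (M k *\<^sub>v x)))"
proof -
  have "x \<bullet> (wsum N A c M *\<^sub>v x) = (\<Sum>i<N. \<Sum>j<N. \<Sum>k\<in>A. c k * (x $ i * M k $$ (i,j) * x $ j))"
    unfolding quadratic_form_eq_sum[OF wsum_carrier x]
    by (simp add: wsum_def sum_distrib_left sum_distrib_right mult_ac)
  also have "\<dots> = (\<Sum>k\<in>A. c k * (x \<bullet> (M k *\<^sub>v x)))"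
    using M x by (simp add: sum.swap[of _ A] quadratic_form_eq_sum[of _ N] sum_distrib_left)
  finally show ?thesis .
qed

lemma transpose_wsum:
  assumes "\<And>k. k \<in> A \<Longrightarrow> M k \<in> carrier_mat N N" "\<And>k. k \<in> A \<Longrightarrow> (M k)\<^sup>T = M k"
  shows "(wsum N A c M)\<^sup>T = wsum N A c M"
proof -
  have "M k $$ (j, i) = M k $$ (i, j)" if "k \<in> A" "i < N" "j < N" for k i j
    using assms that by (metis carrier_matD index_transpose_mat(1))
  then show ?thesis by (intro eq_matI) (auto simp: wsum_def intro: sum.cong)
qed

lemma abs_quadratic_form_le_frob_norm:
  fixes M :: "real mat"
  assumes M: "M \<in> carrier_mat n n" and x: "x \<in> carrier_vec n"
  shows "\<bar>x \<bullet> (M *\<^sub>v x)\<bar> \<le> frob_norm M * (x \<bullet> x)"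
proof -
  have "\<bar>x \<bullet> (M *\<^sub>v x)\<bar> \<le> vnorm x * vnorm (M *\<^sub>v x)"
    using abs_scalar_prod_le_vnorm[of x n "M *\<^sub>v x"] M x by simp
  also have "\<dots> \<le> vnorm x * (frob_norm M * vnorm x)"
    using vnorm_mult_mat_vec_le_frob_norm[OF M x] vnorm_nonneg[of x] by (intro mult_left_mono) auto
  finally show ?thesis by (simp add: vnorm_square[symmetric] power2_eq_square mult_ac)
qed

lemma quadratic_form_le_spec_norm:
  fixes M :: "real mat"
  assumes M: "M \<in> carrier_mat n n" and x: "x \<in> carrier_vec n"
  shows "x \<bullet> (M *\<^sub>v x) \<le> spec_norm M * (x \<bullet> x)"
proof -
  have "x \<bullet> (M *\<^sub>v x) \<le> vnorm x * vnorm (M *\<^sub>v x)"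
    using abs_scalar_prod_le_vnorm[of x n "M *\<^sub>v x"] M x by simp
  also have "\<dots> \<le> vnorm x * (spec_norm M * vnorm x)"
    using vnorm_mult_mat_vec_le_spec_norm[OF M x] vnorm_nonneg[of x] by (intro mult_left_mono) auto
  finally show ?thesis by (simp add: vnorm_square[symmetric] power2_eq_square mult_ac)
qed

section \<open>Orthogonal projections\<close>

definition inj_mat :: "real mat \<Rightarrow> bool" where
  "inj_mat A \<longleftrightarrow> (\<forall>c \<in> carrier_vec (dim_col A). A *\<^sub>v c = 0\<^sub>v (dim_row A) \<longrightarrow> c = 0\<^sub>v (dim_col A))"

definition orth_proj_mat :: "nat \<Rightarrow> real mat \<Rightarrow> bool" where
  "orth_proj_mat n P \<longleftrightarrow> P \<in> carrier_mat n n \<and> P\<^sup>T = P \<and> P * P = P"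

lemma full_col_rank_imp_inj_mat:
  assumes A: "A \<in> carrier_mat n nc" and rank: "full_col_rank A"
  shows "inj_mat A"
  unfolding inj_mat_def
proof (intro ballI impI, rule ccontr)
  interpret V: vec_space "TYPE(real)" n .
  have rk: "V.rank A = nc" using rank A unfolding full_col_rank_def by simp
  fix c assume c: "c \<in> carrier_vec (dim_col A)" "A *\<^sub>v c = 0\<^sub>v (dim_row A)" "c \<noteq> 0\<^sub>v (dim_col A)"
  show False
  proof (cases "distinct (cols A)")
    case True
    then have "V.lin_indpt (set (cols A))" using V.full_rank_lin_indpt[OF A rk] by auto
    moreover have "V.lin_dep (set (cols A))" using V.lin_depI[OF A _ _ _ True] c A by auto
    ultimately show False by simp
  next
    case False
    obtain S where S: "maximal S (\<lambda>T. T \<subseteq> set (cols A) \<and> V.lin_indpt T)"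
      using maximal_exists[of "(\<lambda>T. T \<subseteq> set (cols A) \<and> V.lin_indpt T)" "card (set (cols A))" "{}"]
      by (meson List.finite_set card_mono empty_iff empty_subsetI V.finite_lin_indpt2 rev_finite_subset)
    then have "card S \<le> card (set (cols A))" by (simp add: card_mono maximal_def)
    moreover have "card (set (cols A)) < nc"
      using False A card_distinct[of "cols A"] card_length[of "cols A"]
      by (cases "card (set (cols A)) = nc") auto
    ultimately show False using V.rank_card_indpt[OF A S] rk by simp
  qed
qed

lemma inj_mat_four_block:
  assumes L1: "L1 \<in> carrier_mat N a" and L2: "L2 \<in> carrier_mat N b"
    and inj: "inj_mat (four_block_mat L1 L2 (0\<^sub>m 0 a) (0\<^sub>m 0 b))"
  shows "inj_mat L1" and "inj_mat L2"
proof -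
  let ?F = "four_block_mat L1 L2 (0\<^sub>m 0 a) (0\<^sub>m 0 b)"
  have F_kernel: "u @\<^sub>v w = 0\<^sub>v (a + b)"
    if "u \<in> carrier_vec a" "w \<in> carrier_vec b" "L1 *\<^sub>v u + L2 *\<^sub>v w = 0\<^sub>v N" for u w
  proof -
    have "?F *\<^sub>v (u @\<^sub>v w) = (L1 *\<^sub>v u + L2 *\<^sub>v w) @\<^sub>v (0\<^sub>m 0 a *\<^sub>v u + 0\<^sub>m 0 b *\<^sub>v w)"
      using L1 L2 that by (intro four_block_mat_mult_vec) auto
    also have "\<dots> = 0\<^sub>v N" using that by (intro eq_vecI) auto
    finally show ?thesis using inj L1 L2 that unfolding inj_mat_def by auto
  qed
  show "inj_mat L1" unfolding inj_mat_def
  proof (intro ballI impI)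
    fix c assume c: "c \<in> carrier_vec (dim_col L1)" "L1 *\<^sub>v c = 0\<^sub>v (dim_row L1)"
    have zero: "c @\<^sub>v 0\<^sub>v b = 0\<^sub>v (a + b)" using c L1 L2 by (intro F_kernel) (auto simp: mult_mat_vec_zero)
    have "c $ i = 0" if "i < a" for i
      using arg_cong[OF zero, of "\<lambda>u. u $ i"] that c L1 by simp
    then show "c = 0\<^sub>v (dim_col L1)" using c L1 by (intro eq_vecI) auto
  qed
  show "inj_mat L2" unfolding inj_mat_def
  proof (intro ballI impI)
    fix c assume c: "c \<in> carrier_vec (dim_col L2)" "L2 *\<^sub>v c = 0\<^sub>v (dim_row L2)"
    have zero: "0\<^sub>v a @\<^sub>v c = 0\<^sub>v (a + b)" using c L1 L2 by (intro F_kernel) (auto simp: mult_mat_vec_zero)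
    have "c $ i = 0" if "i < b" for i
      using arg_cong[OF zero, of "\<lambda>u. u $ (a + i)"] that c L2 by simp
    then show "c = 0\<^sub>v (dim_col L2)" using c L2 by (intro eq_vecI) auto
  qed
qed

lemma proj_factorization:
  assumes A: "A \<in> carrier_mat N r" and inj: "inj_mat A"
  obtains B where "B \<in> carrier_mat r r" "B\<^sup>T = B" "B * (A\<^sup>T * A) = 1\<^sub>m r" "proj A = A * B * A\<^sup>T"
proof -
  define G where "G = A\<^sup>T * A"
  have G: "G \<in> carrier_mat r r" unfolding G_def using A by simp
  have "c = 0\<^sub>v r" if c: "c \<in> carrier_vec r" "G *\<^sub>v c = 0\<^sub>v r" for c
  proof -
    have "(A *\<^sub>v c) \<bullet> (A *\<^sub>v c) = c \<bullet> (G *\<^sub>v c)"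
      unfolding G_def using A c transpose_vec_mult_scalar[of A N r c "A *\<^sub>v c"]
      by (simp add: assoc_mult_mat_vec comm_scalar_prod[of _ r])
    then have "A *\<^sub>v c = 0\<^sub>v N" using A c scalar_prod_self_eq_0_iff[of "A *\<^sub>v c" N] by simp
    then show ?thesis using inj A c unfolding inj_mat_def by auto
  qed
  then have "det G \<noteq> 0" using det_0_iff_vec_prod_zero_field[OF G] by auto
  then have "G \<in> Units (ring_mat TYPE(real) r ())" by (rule det_non_zero_imp_unit[OF G])
  then obtain B where inv: "mat_inverse G = Some B"
    using mat_inverse(1)[OF G, of "()"] by (cases "mat_inverse G") auto
  from mat_inverse(2)[OF G inv] have GB: "G * B = 1\<^sub>m r" "B * G = 1\<^sub>m r" and B: "B \<in> carrier_mat r r"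
    by auto
  have "G\<^sup>T = G" unfolding G_def using A by (simp add: transpose_mult)
  then have BG: "B\<^sup>T * G = 1\<^sub>m r" using transpose_mult[OF G B] GB by simp
  have "B\<^sup>T = B\<^sup>T * (G * B)" using B GB by simp
  also have "\<dots> = B\<^sup>T * G * B" using B G by (simp add: assoc_mult_mat[of _ r r _ r _ r])
  also have "\<dots> = B" using BG B by simp
  finally have "B\<^sup>T = B" .
  moreover have "proj A = A * B * A\<^sup>T" unfolding proj_def G_def[symmetric] inv by simp
  ultimately show thesis using that B GB unfolding G_def by blast
qed

lemma proj_mult_self:
  assumes A: "A \<in> carrier_mat N r" and inj: "inj_mat A"
  shows "proj A * A = A"
proof -
  obtain B where B: "B \<in> carrier_mat r r" "B * (A\<^sup>T * A) = 1\<^sub>m r" and P: "proj A = A * B * A\<^sup>T"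
    using proj_factorization[OF A inj] by metis
  have "A * B * A\<^sup>T * A = A * (B * A\<^sup>T) * A" using A B by (simp add: assoc_mult_mat[of A N r B r _ N])
  also have "\<dots> = A * ((B * A\<^sup>T) * A)" using A B by (intro assoc_mult_mat[of _ N r _ N _ r]) auto
  also have "(B * A\<^sup>T) * A = B * (A\<^sup>T * A)" using A B by (intro assoc_mult_mat[of _ r r _ N _ r]) auto
  finally show ?thesis using A B unfolding P by simp
qed

lemma orth_proj_mat_proj:
  assumes A: "A \<in> carrier_mat N r" and inj: "inj_mat A"
  shows "orth_proj_mat N (proj A)"
proof -
  obtain B where B: "B \<in> carrier_mat r r" "B\<^sup>T = B" and P: "proj A = A * B * A\<^sup>T"
    using proj_factorization[OF A inj] by metis
  have carrier: "proj A \<in> carrier_mat N N" unfolding P using A B by simp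
  have factor: "proj A = A * (B * A\<^sup>T)" unfolding P using A B by (intro assoc_mult_mat) auto
  have "(A * (B * A\<^sup>T))\<^sup>T = (B * A\<^sup>T)\<^sup>T * A\<^sup>T" using A B by (intro transpose_mult) auto
  also have "(B * A\<^sup>T)\<^sup>T = A * B" using A B by (simp add: transpose_mult)
  finally have sym: "(proj A)\<^sup>T = proj A" using factor P by metis
  have "proj A * proj A = (proj A * A) * (B * A\<^sup>T)"
    unfolding factor using A B by (intro assoc_mult_mat[symmetric]) auto
  then have "proj A * proj A = proj A" unfolding proj_mult_self[OF A inj] factor[symmetric] .
  then show ?thesis using carrier sym unfolding orth_proj_mat_def by blast
qed

lemma proj_mult_vec_eq_0:
  assumes A: "A \<in> carrier_mat N r" and inj: "inj_mat A"
    and x: "x \<in> carrier_vec N" and Ax: "A\<^sup>T *\<^sub>v x = 0\<^sub>v r"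
  shows "proj A *\<^sub>v x = 0\<^sub>v N"
proof -
  obtain B where B: "B \<in> carrier_mat r r" and P: "proj A = A * B * A\<^sup>T"
    using proj_factorization[OF A inj] by metis
  have "proj A *\<^sub>v x = (A * B) *\<^sub>v (A\<^sup>T *\<^sub>v x)"
    unfolding P using A B x by (intro assoc_mult_mat_vec) auto
  also have "\<dots> = 0\<^sub>v N" unfolding Ax using A B by (simp add: mult_mat_vec_zero[of _ N r])
  finally show ?thesis .
qed

lemma proj_mult_proj_eq_0:
  assumes L1: "L1 \<in> carrier_mat N a" "inj_mat L1" and L2: "L2 \<in> carrier_mat N b" "inj_mat L2"
    and orth: "L1\<^sup>T * L2 = 0\<^sub>m a b"
  shows "proj L1 * proj L2 = 0\<^sub>m N N"
proof -
  obtain B1 where B1: "B1 \<in> carrier_mat a a" "proj L1 = L1 * B1 * L1\<^sup>T"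
    using proj_factorization[OF L1] by metis
  obtain B2 where B2: "B2 \<in> carrier_mat b b" "proj L2 = L2 * B2 * L2\<^sup>T"
    using proj_factorization[OF L2] by metis
  have factor2: "proj L2 = L2 * (B2 * L2\<^sup>T)"
    unfolding B2(2) using L2 B2(1) by (intro assoc_mult_mat) auto
  have "proj L1 * proj L2 = (L1 * B1) * (L1\<^sup>T * (L2 * (B2 * L2\<^sup>T)))"
    unfolding B1(2) factor2 using L1 L2 B1(1) B2(1) by (intro assoc_mult_mat[of _ N a _ N _ N]) auto
  also have "L1\<^sup>T * (L2 * (B2 * L2\<^sup>T)) = (L1\<^sup>T * L2) * (B2 * L2\<^sup>T)"
    using L1 L2 B2(1) by (intro assoc_mult_mat[symmetric, of _ a N _ b _ N]) auto
  finally show ?thesis unfolding orth using L1 L2 B1(1) B2(1) by simp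
qed

lemma orth_proj_mat_add:
  assumes P: "orth_proj_mat n P" and R: "orth_proj_mat n R" and PR: "P * R = 0\<^sub>m n n"
  shows "orth_proj_mat n (P + R)"
proof -
  have carrier: "P \<in> carrier_mat n n" "R \<in> carrier_mat n n" using P R unfolding orth_proj_mat_def by auto
  have "R * P = (P * R)\<^sup>T" using P R carrier unfolding orth_proj_mat_def by (simp add: transpose_mult)
  then have RP: "R * P = 0\<^sub>m n n" unfolding PR by simp
  have "(P + R) * (P + R) = P * P + R * P + (P * R + R * R)"
    using carrier by (simp add: add_mult_distrib_mat[of _ n n] mult_add_distrib_mat[of _ n n])
  then show ?thesis using P R carrier PR RP unfolding orth_proj_mat_def by (simp add: transpose_add)
qed

lemma quadratic_form_orth_proj_mat:
  assumes P: "orth_proj_mat n P" and x: "x \<in> carrier_vec n"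
  shows "0 \<le> x \<bullet> (P *\<^sub>v x)" and "x \<bullet> (P *\<^sub>v x) \<le> x \<bullet> x"
proof -
  have carrier: "P \<in> carrier_mat n n" "P *\<^sub>v x \<in> carrier_vec n" using P x unfolding orth_proj_mat_def by auto
  have "x \<bullet> (P *\<^sub>v x) = x \<bullet> (P *\<^sub>v (P *\<^sub>v x))"
    using P x unfolding orth_proj_mat_def by (metis assoc_mult_mat_vec)
  also have "\<dots> = (P *\<^sub>v x) \<bullet> (P *\<^sub>v x)"
    using transpose_vec_mult_scalar[of P n n "P *\<^sub>v x" x] P x carrier unfolding orth_proj_mat_def by simp
  finally have Px: "x \<bullet> (P *\<^sub>v x) = (P *\<^sub>v x) \<bullet> (P *\<^sub>v x)" .
  then show "0 \<le> x \<bullet> (P *\<^sub>v x)" using scalar_prod_self_nonneg by simp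
  have "(x - P *\<^sub>v x) \<bullet> (x - P *\<^sub>v x) = x \<bullet> x - 2 * (x \<bullet> (P *\<^sub>v x)) + (P *\<^sub>v x) \<bullet> (P *\<^sub>v x)"
    using x carrier(2) by (simp add: scalar_prod_minus_distrib minus_scalar_prod_distrib
        comm_scalar_prod[of "P *\<^sub>v x" n x] algebra_simps)
  then show "x \<bullet> (P *\<^sub>v x) \<le> x \<bullet> x" using scalar_prod_self_nonneg[of "x - P *\<^sub>v x"] Px by simp
qed

lemma orth_proj_mats_of_orthogonal_blocks:
  assumes L1: "L1 \<in> carrier_mat N a" and L2: "L2 \<in> carrier_mat N b"
    and rank: "full_col_rank (four_block_mat L1 L2 (0\<^sub>m 0 a) (0\<^sub>m 0 b))"
    and orth: "L1\<^sup>T * L2 = 0\<^sub>m a b"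
  shows "inj_mat L1" "orth_proj_mat N (proj L1)" "orth_proj_mat N (proj L2)"
    "orth_proj_mat N (proj L1 + proj L2)"
proof -
  have "inj_mat (four_block_mat L1 L2 (0\<^sub>m 0 a) (0\<^sub>m 0 b))"
    using L1 L2 rank by (intro full_col_rank_imp_inj_mat[of _ N "a + b"]) auto
  then have inj: "inj_mat L1" "inj_mat L2" using inj_mat_four_block[OF L1 L2] by auto
  then show "inj_mat L1" by simp
  show "orth_proj_mat N (proj L1)" "orth_proj_mat N (proj L2)"
    using orth_proj_mat_proj L1 L2 inj by auto
  then show "orth_proj_mat N (proj L1 + proj L2)"
    using orth_proj_mat_add proj_mult_proj_eq_0[OF L1 inj(1) L2 inj(2) orth] by blast
qed

section \<open>Spectral theorem for real symmetric matrices\<close>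

lemma symmetric_eigenvalue_real:
  fixes A :: "real mat" and a :: complex
  assumes A: "A \<in> carrier_mat n n" and sym: "A\<^sup>T = A" and a: "eigenvalue (of_real_hom.mat_hom A) a"
  shows "a \<in> \<real>"
proof -
  let ?Ac = "of_real_hom.mat_hom A :: complex mat"
  have Ac: "?Ac \<in> carrier_mat n n" "?Ac\<^sup>T = ?Ac" using A sym by (auto simp: map_mat_transpose)
  obtain v where v: "v \<in> carrier_vec n" "v \<noteq> 0\<^sub>v n" and Av: "?Ac *\<^sub>v v = a \<cdot>\<^sub>v v"
    using a A unfolding eigenvalue_def eigenvector_def by auto
  have real_entries: "conjugate (?Ac *\<^sub>v v) = ?Ac *\<^sub>v conjugate v"
  proof (rule eq_vecI)
    fix i assume "i < dim_vec (?Ac *\<^sub>v conjugate v)"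
    then have i: "i < n" using A by simp
    have "conjugate (row ?Ac i) = row ?Ac i" using A i by (intro eq_vecI) auto
    then show "conjugate (?Ac *\<^sub>v v) $ i = (?Ac *\<^sub>v conjugate v) $ i"
      using i A v conjugate_sprod_vec[of "row ?Ac i" n v] by simp
  qed (use A in simp)
  have "a * (v \<bullet>c v) = (?Ac *\<^sub>v v) \<bullet> conjugate v" unfolding Av using v by simp
  also have "\<dots> = v \<bullet> (?Ac *\<^sub>v conjugate v)"
    using transpose_vec_mult_scalar[of ?Ac n n "conjugate v" v] Ac v by simp
  also have "\<dots> = cnj a * (v \<bullet>c v)"
    unfolding real_entries[symmetric] Av conjugate_smult_vec using v by simp
  finally have "cnj a = a" using v by simp
  then show ?thesis by (simp add: Reals_cnj_iff)
qed

lemma symmetric_unit_eigenvector_exists: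
  fixes A :: "real mat"
  assumes A: "A \<in> carrier_mat n n" and sym: "A\<^sup>T = A" and n: "0 < n"
  obtains e v where "v \<in> carrier_vec n" "v \<bullet> v = 1" "A *\<^sub>v v = e \<cdot>\<^sub>v v"
proof -
  let ?Ac = "of_real_hom.mat_hom A :: complex mat"
  have "?Ac \<in> carrier_mat n n" using A by simp
  then obtain as where cp: "char_poly ?Ac = (\<Prod>a\<leftarrow>as. [:- a, 1:])" and "length as = n"
    using char_poly_factorized by blast
  then obtain a rest where as: "as = a # rest" using n by (cases as) auto
  have "eigenvalue ?Ac a" using A by (simp add: eigenvalue_root_char_poly[of _ n] cp as)
  then have "a = of_real (Re a)" using symmetric_eigenvalue_real[OF A sym] by (simp add: Reals_def)
  moreover have "poly (char_poly ?Ac) a = 0" unfolding cp as by simp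
  ultimately have "poly (char_poly A) (Re a) = 0"
    using of_real_hom.char_poly_hom[OF A] by (metis of_real_eq_0_iff of_real_hom.poly_map_poly)
  then obtain w where w: "w \<in> carrier_vec n" "w \<noteq> 0\<^sub>v n" "A *\<^sub>v w = Re a \<cdot>\<^sub>v w"
    using eigenvalue_root_char_poly[OF A] A unfolding eigenvalue_def eigenvector_def by auto
  then have pos: "0 < vnorm w" using vnorm_nonneg[of w] vnorm_square[of w] scalar_prod_self_eq_0_iff
    by (metis less_eq_real_def power_zero_numeral)
  show thesis
  proof
    show "(1 / vnorm w) \<cdot>\<^sub>v w \<in> carrier_vec n" using w by simp
    have "((1 / vnorm w) \<cdot>\<^sub>v w) \<bullet> ((1 / vnorm w) \<cdot>\<^sub>v w) = (vnorm w)\<^sup>2 / (vnorm w)\<^sup>2"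
      using w(1) vnorm_square[of w] by (simp add: power2_eq_square)
    then show "((1 / vnorm w) \<cdot>\<^sub>v w) \<bullet> ((1 / vnorm w) \<cdot>\<^sub>v w) = 1"
      using pos by (metis divide_self power_not_zero order_less_irrefl)
    show "A *\<^sub>v ((1 / vnorm w) \<cdot>\<^sub>v w) = Re a \<cdot>\<^sub>v ((1 / vnorm w) \<cdot>\<^sub>v w)"
      using w A by (simp add: mult_mat_vec smult_smult_assoc mult.commute)
  qed
qed

lemma orthonormal_completion:
  fixes v :: "real vec"
  assumes v: "v \<in> carrier_vec n" and unit: "v \<bullet> v = 1"
  obtains W where "W \<in> carrier_mat n n" "W\<^sup>T * W = 1\<^sub>m n" "col W 0 = v"
proof -
  interpret cof_vec_space n "TYPE(real)" .
  have v0: "v \<noteq> 0\<^sub>v n" using unit v by auto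
  then have n: "0 < n" using v by (cases n) auto
  define bs where "bs = basis_completion v"
  note bc = basis_completion[OF v v0, folded bs_def]
  define ws where "ws = gram_schmidt n bs"
  note gs = gram_schmidt_result[OF bc(2) bc(4) bc(5) ws_def]
  have len: "length ws = n" using gs(4) bc(6) by simp
  have "bs = v # tl bs" using bc(6) bc(7) n by (cases bs) auto
  then have "hd ws = v" unfolding ws_def using v by (metis gram_schmidt_hd)
  then have ws0: "ws ! 0 = v" using len n by (cases ws) auto
  have ws: "ws ! i \<in> carrier_vec n" if "i < n" for i using gs(3) len that by auto
  have orth: "ws ! i \<bullet> ws ! j = 0 \<longleftrightarrow> i \<noteq> j" if "i < n" "j < n" for i j
    using corthogonalD[OF gs(2), of i j] that len by simp
  define W where "W = mat_of_cols n (map (\<lambda>w. (1 / vnorm w) \<cdot>\<^sub>v w) ws)"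
  have W: "W \<in> carrier_mat n n" unfolding W_def using len by (metis length_map mat_of_cols_carrier(1))
  have col: "col W j = (1 / vnorm (ws ! j)) \<cdot>\<^sub>v ws ! j" if "j < n" for j
    unfolding W_def using that len ws by simp
  have "col W i \<bullet> col W j = 1\<^sub>m n $$ (i,j)" if ij: "i < n" "j < n" for i j
  proof (cases "i = j")
    case True
    then have "vnorm (ws ! i) * vnorm (ws ! i) = ws ! i \<bullet> ws ! i" "ws ! i \<bullet> ws ! i \<noteq> 0"
      using vnorm_square[of "ws ! i"] orth[OF ij(1) ij(1)] by (auto simp: power2_eq_square)
    then show ?thesis using ij ws unfolding True col[OF ij(2)] by simp
  next
    case False
    then show ?thesis using ij ws[OF ij(1)] ws[OF ij(2)] orth[OF ij] unfolding col[OF ij(1)] col[OF ij(2)]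
      by simp
  qed
  then have "W\<^sup>T * W = 1\<^sub>m n" using W by (intro eq_matI) auto
  moreover have "col W 0 = v" using col[OF n] ws0 unit by (simp add: vnorm_def)
  ultimately show thesis by (rule that[OF W])
qed

lemma mult_four_block_diag:
  fixes X1 :: "real mat"
  assumes "X1 \<in> carrier_mat a k" "Y1 \<in> carrier_mat b l" "X2 \<in> carrier_mat k c" "Y2 \<in> carrier_mat l d"
  shows "four_block_mat X1 (0\<^sub>m a l) (0\<^sub>m b k) Y1 * four_block_mat X2 (0\<^sub>m k d) (0\<^sub>m l c) Y2
     = four_block_mat (X1 * X2) (0\<^sub>m a d) (0\<^sub>m b c) (Y1 * Y2)"
  by (subst mult_four_block_mat[of _ a k _ l _ b]) (use assms in auto)

lemma transpose_four_block_diag: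
  fixes X :: "real mat"
  assumes "X \<in> carrier_mat a k" "Y \<in> carrier_mat b l"
  shows "(four_block_mat X (0\<^sub>m a l) (0\<^sub>m b k) Y)\<^sup>T = four_block_mat X\<^sup>T (0\<^sub>m k b) (0\<^sub>m l a) Y\<^sup>T"
  using transpose_four_block_mat[of X a k "0\<^sub>m a l" l "0\<^sub>m b k" b Y] assms by simp

lemma symmetric_deflation:
  fixes A :: "real mat"
  assumes A: "A \<in> carrier_mat (Suc m) (Suc m)" and sym: "A\<^sup>T = A"
    and v: "v \<in> carrier_vec (Suc m)" "v \<bullet> v = 1" and Av: "A *\<^sub>v v = e \<cdot>\<^sub>v v"
  obtains W B where "W \<in> carrier_mat (Suc m) (Suc m)" "W\<^sup>T * W = 1\<^sub>m (Suc m)"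
    "B \<in> carrier_mat m m" "B\<^sup>T = B"
    "W\<^sup>T * A * W = four_block_mat (mat 1 1 (\<lambda>_. e)) (0\<^sub>m 1 m) (0\<^sub>m m 1) B"
proof -
  let ?n = "Suc m"
  obtain W where W: "W \<in> carrier_mat ?n ?n" "W\<^sup>T * W = 1\<^sub>m ?n" "col W 0 = v"
    using orthonormal_completion[OF v] by blast
  define C where "C = W\<^sup>T * A * W"
  have C: "C \<in> carrier_mat ?n ?n" unfolding C_def using W A by simp
  have "C\<^sup>T = W\<^sup>T * (W\<^sup>T * A)\<^sup>T" unfolding C_def using W A by (intro transpose_mult) auto
  also have "(W\<^sup>T * A)\<^sup>T = A\<^sup>T * W" using W A by (subst transpose_mult) auto
  finally have CT: "C\<^sup>T = C" unfolding C_def using sym W A by (simp add: assoc_mult_mat[of _ ?n ?n])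
  have C_sym: "C $$ (i, j) = C $$ (j, i)" if "i < ?n" "j < ?n" for i j
    using CT C that by (metis carrier_matD index_transpose_mat(1))
  have C_col0: "C $$ (i, 0) = (if i = 0 then e else 0)" if i: "i < ?n" for i
  proof -
    have "C = W\<^sup>T * (A * W)" unfolding C_def using W A by (intro assoc_mult_mat) auto
    then have "C $$ (i, 0) = row W\<^sup>T i \<bullet> col (A * W) 0" using W A i by simp
    also have "col (A * W) 0 = A *\<^sub>v v" unfolding W(3)[symmetric] using W A by (intro col_mult2) auto
    also have "row W\<^sup>T i = col W i" using W i by simp
    also have "col W i \<bullet> (A *\<^sub>v v) = e * (col W i \<bullet> v)" unfolding Av using W v i by simp
    also have "col W i \<bullet> v = (W\<^sup>T * W) $$ (i, 0)" using W(1,3) i by simp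
    finally show ?thesis unfolding W(2) using i by simp
  qed
  define B where "B = mat m m (\<lambda>(i,j). C $$ (Suc i, Suc j))"
  have "C = four_block_mat (mat 1 1 (\<lambda>_. e)) (0\<^sub>m 1 m) (0\<^sub>m m 1) B"
  proof (rule eq_matI)
    fix i j assume "i < dim_row (four_block_mat (mat 1 1 (\<lambda>_. e)) (0\<^sub>m 1 m) (0\<^sub>m m 1) B)"
      "j < dim_col (four_block_mat (mat 1 1 (\<lambda>_. e)) (0\<^sub>m 1 m) (0\<^sub>m m 1) B)"
    then have ij: "i < ?n" "j < ?n" unfolding B_def by auto
    show "C $$ (i, j) = four_block_mat (mat 1 1 (\<lambda>_. e)) (0\<^sub>m 1 m) (0\<^sub>m m 1) B $$ (i, j)"
      using ij C_col0 C_sym[of 0 j] C_col0[of j] unfolding B_def by (cases i; cases j) auto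
  qed (use C B_def in auto)
  moreover have "B\<^sup>T = B" unfolding B_def using C_sym by (intro eq_matI) auto
  moreover have "B \<in> carrier_mat m m" unfolding B_def by simp
  ultimately show thesis using that[OF W(1,2)] unfolding C_def by blast
qed

lemma congruence_mult:
  fixes A W F :: "real mat"
  assumes "A \<in> carrier_mat n n" "W \<in> carrier_mat n n" "F \<in> carrier_mat n n"
  shows "(W * F)\<^sup>T * A * (W * F) = F\<^sup>T * (W\<^sup>T * A * W) * F"
  using assms by (simp add: transpose_mult[of _ n n] assoc_mult_mat[of _ n n _ n _ n]
      mult_carrier_mat[of _ n n _ n])

lemma orthogonal_four_block_extension:
  fixes Q B E :: "real mat"
  assumes Q: "Q \<in> carrier_mat m m" "Q\<^sup>T * Q = 1\<^sub>m m" and E: "E \<in> carrier_mat 1 1" and B: "B \<in> carrier_mat m m"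
  defines "F \<equiv> four_block_mat (1\<^sub>m 1) (0\<^sub>m 1 m) (0\<^sub>m m 1) Q"
  shows "F \<in> carrier_mat (Suc m) (Suc m)" and "F\<^sup>T * F = 1\<^sub>m (Suc m)"
    and "F\<^sup>T * four_block_mat E (0\<^sub>m 1 m) (0\<^sub>m m 1) B * F = four_block_mat E (0\<^sub>m 1 m) (0\<^sub>m m 1) (Q\<^sup>T * B * Q)"
proof -
  show "F \<in> carrier_mat (Suc m) (Suc m)" unfolding F_def using Q by auto
  have FT: "F\<^sup>T = four_block_mat (1\<^sub>m 1) (0\<^sub>m 1 m) (0\<^sub>m m 1) Q\<^sup>T"
    unfolding F_def using Q by (subst transpose_four_block_diag[of _ 1 1 _ m m]) auto
  have "F\<^sup>T * F = four_block_mat (1\<^sub>m 1 * 1\<^sub>m 1) (0\<^sub>m 1 m) (0\<^sub>m m 1) (Q\<^sup>T * Q)"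
    unfolding FT unfolding F_def using Q by (intro mult_four_block_diag) auto
  then show "F\<^sup>T * F = 1\<^sub>m (Suc m)" using Q by simp
  have "F\<^sup>T * four_block_mat E (0\<^sub>m 1 m) (0\<^sub>m m 1) B = four_block_mat (1\<^sub>m 1 * E) (0\<^sub>m 1 m) (0\<^sub>m m 1) (Q\<^sup>T * B)"
    unfolding FT using Q B E by (intro mult_four_block_diag) auto
  also have "\<dots> * F = four_block_mat (1\<^sub>m 1 * E * 1\<^sub>m 1) (0\<^sub>m 1 m) (0\<^sub>m m 1) (Q\<^sup>T * B * Q)"
    unfolding F_def using Q B E by (intro mult_four_block_diag) auto
  finally show "F\<^sup>T * four_block_mat E (0\<^sub>m 1 m) (0\<^sub>m m 1) B * F = four_block_mat E (0\<^sub>m 1 m) (0\<^sub>m m 1) (Q\<^sup>T * B * Q)"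
    using E by simp
qed

lemma symmetric_orthogonal_diagonalization:
  fixes A :: "real mat"
  assumes "A \<in> carrier_mat n n" "A\<^sup>T = A"
  shows "\<exists>Q es. Q \<in> carrier_mat n n \<and> Q\<^sup>T * Q = 1\<^sub>m n \<and> length es = n \<and>
    Q\<^sup>T * A * Q = mat_diag n ((!) es)"
  using assms
proof (induction n arbitrary: A)
  case 0
  then show ?case by (intro exI[of _ "1\<^sub>m 0"] exI[of _ "[]"]) (auto intro!: eq_matI simp: mat_diag_def)
next
  case (Suc m)
  let ?n = "Suc m"
  have A: "A \<in> carrier_mat ?n ?n" and sym: "A\<^sup>T = A" using Suc by auto
  obtain e v where "v \<in> carrier_vec ?n" "v \<bullet> v = 1" "A *\<^sub>v v = e \<cdot>\<^sub>v v"
    using symmetric_unit_eigenvector_exists[OF A sym] by blast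
  then obtain W B where W: "W \<in> carrier_mat ?n ?n" "W\<^sup>T * W = 1\<^sub>m ?n"
    and B: "B \<in> carrier_mat m m" "B\<^sup>T = B"
    and WAW: "W\<^sup>T * A * W = four_block_mat (mat 1 1 (\<lambda>_. e)) (0\<^sub>m 1 m) (0\<^sub>m m 1) B"
    using symmetric_deflation[OF A sym] by metis
  obtain Q es where Q: "Q \<in> carrier_mat m m" "Q\<^sup>T * Q = 1\<^sub>m m" "length es = m"
    and QBQ: "Q\<^sup>T * B * Q = mat_diag m ((!) es)"
    using Suc.IH[OF B] by blast
  define F where "F = four_block_mat (1\<^sub>m 1) (0\<^sub>m 1 m) (0\<^sub>m m 1) Q"
  note F = orthogonal_four_block_extension[OF Q(1,2) _ B(1), of "mat 1 1 (\<lambda>_. e)", folded F_def]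
  have "(W * F)\<^sup>T * A * (W * F) = F\<^sup>T * (W\<^sup>T * A * W) * F" using A W F by (intro congruence_mult) auto
  also have "\<dots> = four_block_mat (mat 1 1 (\<lambda>_. e)) (0\<^sub>m 1 m) (0\<^sub>m m 1) (mat_diag m ((!) es))"
    unfolding WAW QBQ[symmetric] by (rule F(3)) simp
  also have "\<dots> = mat_diag ?n ((!) (e # es))"
    by (intro eq_matI) (auto simp: mat_diag_def less_Suc_eq_0_disj split: if_splits)
  finally have "(W * F)\<^sup>T * A * (W * F) = mat_diag ?n ((!) (e # es))" .
  moreover have "(W * F)\<^sup>T * (W * F) = 1\<^sub>m ?n"
    using congruence_mult[of "1\<^sub>m ?n" ?n W F] W F by simp
  moreover have "W * F \<in> carrier_mat ?n ?n" using W F by simp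
  ultimately show ?case using Q(3) by (intro exI[of _ "W * F"] exI[of _ "e # es"] conjI) auto
qed

section \<open>Eigenvalue bounds from quadratic forms\<close>

lemma exists_nonzero_orthogonal_vec:
  fixes fs :: "real vec list"
  assumes fs: "set fs \<subseteq> carrier_vec n" and len: "length fs < n"
  obtains z where "z \<in> carrier_vec n" "z \<noteq> 0\<^sub>v n" "\<forall>f \<in> set fs. f \<bullet> z = 0"
proof -
  \<comment> \<open>the rows of \<open>fs\<close>, padded with zero rows, form a singular matrix; take a kernel vector\<close>
  define c where "c = (\<lambda>i. if i < length fs then fs ! i else 0\<^sub>v n)"
  have c: "c \<in> {0..<n} \<rightarrow> carrier_vec n" unfolding c_def using fs nth_mem by fastforce
  define M where "M = mat\<^sub>r n n (\<lambda>i. if i = n - 1 then 0\<^sub>v n else c i)"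
  have M: "M \<in> carrier_mat n n" unfolding M_def by simp
  have "det M = 0" unfolding M_def using len by (intro det_row_0 c) auto
  then obtain z where z: "z \<in> carrier_vec n" "z \<noteq> 0\<^sub>v n" "M *\<^sub>v z = 0\<^sub>v n"
    using det_0_iff_vec_prod_zero_field[OF M] by auto
  have "fs ! i \<bullet> z = 0" if i: "i < length fs" for i
  proof -
    have "fs ! i \<in> carrier_vec n" using fs nth_mem[OF i] by auto
    then have "row M i = fs ! i" unfolding M_def c_def using i len by (subst row_mat_of_row_fun) auto
    then show ?thesis using z M i len by (metis index_mult_mat_vec index_zero_vec(1) carrier_matD(1)
          less_trans)
  qed
  then show thesis using that z by (metis in_set_conv_nth)
qed

lemma inj_mat_dim_le:
  assumes L: "L \<in> carrier_mat n s" and inj: "inj_mat L"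
  shows "s \<le> n"
proof (rule ccontr)
  assume "\<not> s \<le> n"
  moreover have "set (rows L) \<subseteq> carrier_vec s" using L by (auto simp: rows_def)
  ultimately obtain z where z: "z \<in> carrier_vec s" "z \<noteq> 0\<^sub>v s" "\<forall>f \<in> set (rows L). f \<bullet> z = 0"
    using exists_nonzero_orthogonal_vec[of "rows L" s] L by auto
  then have "L *\<^sub>v z = 0\<^sub>v n" using L by (intro eq_vecI) (auto simp: rows_def)
  then show False using inj L z unfolding inj_mat_def by auto
qed

lemma proots_prod_linear: "proots (\<Prod>a\<leftarrow>es. [:- a, 1:]) = mset (es :: real list)"
proof (induction es)
  case (Cons a es)
  have "(\<Prod>a\<leftarrow>es. [:- a, 1:]) \<noteq> (0 :: real poly)" by (auto simp: prod_list_zero_iff)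
  then have "proots ([:- a, 1:] * (\<Prod>x\<leftarrow>es. [:- x, 1:])) = {#a#} + proots (\<Prod>x\<leftarrow>es. [:- x, 1:])"
    by (subst proots_mult) auto
  then show ?case using Cons by simp
qed simp

lemma eigs_desc_of_diagonalization:
  fixes A Q :: "real mat"
  assumes A: "A \<in> carrier_mat n n" and Q: "Q \<in> carrier_mat n n" "Q * Q\<^sup>T = 1\<^sub>m n" "Q\<^sup>T * Q = 1\<^sub>m n"
    and len: "length es = n" and diag: "A = Q * mat_diag n ((!) es) * Q\<^sup>T"
  shows "mset (eigs_desc A) = mset es"
proof -
  have "similar_mat A (mat_diag n ((!) es))"
    unfolding similar_mat_def similar_mat_wit_def Let_def using Q diag A
    by (intro exI[of _ Q] exI[of _ "Q\<^sup>T"]) auto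
  then have "char_poly A = char_poly (mat_diag n ((!) es))" by (rule char_poly_similar)
  also have "\<dots> = (\<Prod>a\<leftarrow>diag_mat (mat_diag n ((!) es)). [:- a, 1:])"
    by (intro char_poly_upper_triangular[of _ n]) (auto simp: upper_triangular_def mat_diag_def)
  also have "diag_mat (mat_diag n ((!) es)) = es"
    using len by (intro nth_equalityI) (auto simp: diag_mat_def mat_diag_def)
  finally have "proots (char_poly A) = mset es" by (simp add: proots_prod_linear)
  then show ?thesis unfolding eigs_desc_def by simp
qed

lemma quadratic_form_of_diagonalization:
  fixes A Q :: "real mat"
  assumes Q: "Q \<in> carrier_mat n n" "Q * Q\<^sup>T = 1\<^sub>m n"
    and len: "length es = n" and diag: "A = Q * mat_diag n ((!) es) * Q\<^sup>T" and x: "x \<in> carrier_vec n"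
  shows "x \<bullet> (A *\<^sub>v x) = (\<Sum>i<n. es ! i * ((Q\<^sup>T *\<^sub>v x) $ i)\<^sup>2)"
    and "x \<bullet> x = (\<Sum>i<n. ((Q\<^sup>T *\<^sub>v x) $ i)\<^sup>2)"
proof -
  define y where "y = Q\<^sup>T *\<^sub>v x"
  have y: "y \<in> carrier_vec n" unfolding y_def using Q x by simp
  have xy: "x = Q *\<^sub>v y" unfolding y_def using Q x
    by (metis assoc_mult_mat_vec one_mult_mat_vec transpose_carrier_mat)
  have Dy: "mat_diag n ((!) es) *\<^sub>v y \<in> carrier_vec n" using mat_diag_dim y by (rule mult_mat_vec_carrier)
  have "A *\<^sub>v x = Q *\<^sub>v (mat_diag n ((!) es) *\<^sub>v y)"
    unfolding diag y_def using Q x by (simp add: assoc_mult_mat_vec[of _ n n _ n])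
  then have "x \<bullet> (A *\<^sub>v x) = (Q\<^sup>T *\<^sub>v x) \<bullet> (mat_diag n ((!) es) *\<^sub>v y)"
    using transpose_vec_mult_scalar[OF Q(1) Dy x] by simp
  also have "\<dots> = y \<bullet> (mat_diag n ((!) es) *\<^sub>v y)" unfolding y_def ..
  also have "\<dots> = (\<Sum>i<n. es ! i * (y $ i)\<^sup>2)"
  proof -
    have "(mat_diag n ((!) es) *\<^sub>v y) $ i = es ! i * y $ i" if i: "i < n" for i
    proof -
      have "(mat_diag n ((!) es) *\<^sub>v y) $ i = (\<Sum>j<n. (if i = j then es ! j else 0) * y $ j)"
        using i y by (simp add: mat_diag_def scalar_prod_eq_sum[of _ n])
      also have "\<dots> = (\<Sum>j<n. if j = i then es ! i * y $ i else 0)" by (intro sum.cong) auto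
      finally show ?thesis using i by simp
    qed
    then show ?thesis using y Dy by (simp add: scalar_prod_eq_sum[of _ n] power2_eq_square mult_ac)
  qed
  finally show "x \<bullet> (A *\<^sub>v x) = (\<Sum>i<n. es ! i * ((Q\<^sup>T *\<^sub>v x) $ i)\<^sup>2)" unfolding y_def .
  have "x \<bullet> x = y \<bullet> y" using transpose_vec_mult_scalar[of Q n n y x] Q x y xy unfolding y_def by simp
  then show "x \<bullet> x = (\<Sum>i<n. ((Q\<^sup>T *\<^sub>v x) $ i)\<^sup>2)" using y unfolding y_def
    by (simp add: scalar_prod_eq_sum[of _ n] power2_eq_square)
qed

lemma symmetric_spectral_form:
  fixes A :: "real mat"
  assumes A: "A \<in> carrier_mat n n" and sym: "A\<^sup>T = A"
  obtains Q es where "Q \<in> carrier_mat n n" "Q\<^sup>T * Q = 1\<^sub>m n" "length es = n"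
    "\<And>P. length (filter P (eigs_desc A)) = length (filter (\<lambda>i. P (es ! i)) [0..<n])"
    "\<And>x. x \<in> carrier_vec n \<Longrightarrow> x \<bullet> (A *\<^sub>v x) = (\<Sum>i<n. es ! i * ((Q\<^sup>T *\<^sub>v x) $ i)\<^sup>2)"
    "\<And>x. x \<in> carrier_vec n \<Longrightarrow> x \<bullet> x = (\<Sum>i<n. ((Q\<^sup>T *\<^sub>v x) $ i)\<^sup>2)"
proof -
  obtain Q es where Q: "Q \<in> carrier_mat n n" "Q\<^sup>T * Q = 1\<^sub>m n" and len: "length es = n"
    and D: "Q\<^sup>T * A * Q = mat_diag n ((!) es)"
    using symmetric_orthogonal_diagonalization[OF A sym] by blast
  have QQT: "Q * Q\<^sup>T = 1\<^sub>m n" using mat_mult_left_right_inverse[of "Q\<^sup>T" n Q] Q by simp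
  have "Q * mat_diag n ((!) es) * Q\<^sup>T = (Q * Q\<^sup>T) * A * (Q * Q\<^sup>T)"
    unfolding D[symmetric] using Q(1) A
    by (simp add: assoc_mult_mat[of _ n n _ n _ n] mult_carrier_mat[of _ n n _ n])
  then have diag: "A = Q * mat_diag n ((!) es) * Q\<^sup>T" unfolding QQT using A by simp
  have "length (filter P (eigs_desc A)) = length (filter (\<lambda>i. P (es ! i)) [0..<n])" for P
  proof -
    have "length (filter P (eigs_desc A)) = length (filter P es)"
      using eigs_desc_of_diagonalization[OF A Q(1) QQT Q(2) len diag]
      by (metis mset_filter size_mset)
    also have "\<dots> = length (filter P (map ((!) es) [0..<n]))" by (simp only: len[symmetric] map_nth)
    finally show ?thesis by (simp add: filter_map o_def)
  qed
  then show thesis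
    using that[OF Q len] quadratic_form_of_diagonalization[OF Q(1) QQT len diag] by blast
qed

lemma length_eigs_desc:
  assumes A: "A \<in> carrier_mat n n" and sym: "A\<^sup>T = A"
  shows "length (eigs_desc A) = n"
proof (rule symmetric_spectral_form[OF A sym])
  fix es
  assume "\<And>P. length (filter P (eigs_desc A)) = length (filter (\<lambda>i. P (es ! i)) [0..<n])"
  from this[of "\<lambda>_. True"] show ?thesis by simp
qed

lemma sum_weighted_squares_less:
  fixes e y :: "nat \<Rightarrow> real"
  assumes nonzero: "\<exists>i<n. y i \<noteq> 0" and below: "\<And>i. i < n \<Longrightarrow> y i \<noteq> 0 \<Longrightarrow> e i < c"
  shows "(\<Sum>i<n. e i * (y i)\<^sup>2) < c * (\<Sum>i<n. (y i)\<^sup>2)"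
proof -
  have "(\<Sum>i<n. e i * (y i)\<^sup>2) < (\<Sum>i<n. c * (y i)\<^sup>2)"
  proof (rule sum_strict_mono_ex1)
    show "\<forall>i\<in>{..<n}. e i * (y i)\<^sup>2 \<le> c * (y i)\<^sup>2"
      using below by (metis less_eq_real_def lessThan_iff mult_right_mono zero_le_power2
          power_zero_numeral mult_zero_right)
    from nonzero obtain i where i: "i < n" "y i \<noteq> 0" by blast
    then have "e i * (y i)\<^sup>2 < c * (y i)\<^sup>2" using below by (intro mult_strict_right_mono) auto
    then show "\<exists>i\<in>{..<n}. e i * (y i)\<^sup>2 < c * (y i)\<^sup>2" using i(1) by blast
  qed simp
  then show ?thesis by (simp add: sum_distrib_left)
qed

lemma card_eigs_ge_if_quadratic_form_ge:
  fixes A L :: "real mat"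
  assumes A: "A \<in> carrier_mat n n" and sym: "A\<^sup>T = A" and L: "L \<in> carrier_mat n s" and inj: "inj_mat L"
    and ge: "\<And>z. z \<in> carrier_vec s \<Longrightarrow> c * ((L *\<^sub>v z) \<bullet> (L *\<^sub>v z)) \<le> (L *\<^sub>v z) \<bullet> (A *\<^sub>v (L *\<^sub>v z))"
  shows "s \<le> length (filter (\<lambda>e. c \<le> e) (eigs_desc A))"
proof (rule ccontr)
  obtain Q es where Q: "Q \<in> carrier_mat n n" "Q\<^sup>T * Q = 1\<^sub>m n" and "length es = n"
    and count: "\<And>P. length (filter P (eigs_desc A)) = length (filter (\<lambda>i. P (es ! i)) [0..<n])"
    and form: "\<And>x. x \<in> carrier_vec n \<Longrightarrow> x \<bullet> (A *\<^sub>v x) = (\<Sum>i<n. es ! i * ((Q\<^sup>T *\<^sub>v x) $ i)\<^sup>2)"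
      "\<And>x. x \<in> carrier_vec n \<Longrightarrow> x \<bullet> x = (\<Sum>i<n. ((Q\<^sup>T *\<^sub>v x) $ i)\<^sup>2)"
    using symmetric_spectral_form[OF A sym] by blast
  define K where "K = filter (\<lambda>i. c \<le> es ! i) [0..<n]"
  define fs where "fs = map (\<lambda>i. L\<^sup>T *\<^sub>v col Q i) K"
  assume "\<not> ?thesis"
  then have "length fs < s" unfolding fs_def K_def count by simp
  moreover have "set fs \<subseteq> carrier_vec s" unfolding fs_def using L by (auto intro!: carrier_vecI)
  ultimately obtain z where z: "z \<in> carrier_vec s" "z \<noteq> 0\<^sub>v s" and orth: "\<forall>f \<in> set fs. f \<bullet> z = 0"
    using exists_nonzero_orthogonal_vec[of fs s] by blast
  define x where "x = L *\<^sub>v z"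
  have x: "x \<in> carrier_vec n" unfolding x_def using L z by simp
  have "x \<noteq> 0\<^sub>v n" using inj z L unfolding inj_mat_def x_def by auto
  then have "0 < (\<Sum>i<n. ((Q\<^sup>T *\<^sub>v x) $ i)\<^sup>2)"
    using form(2)[OF x] scalar_prod_self_eq_0_iff[OF x] scalar_prod_self_nonneg[of x] by simp
  then have nonzero: "\<exists>i<n. (Q\<^sup>T *\<^sub>v x) $ i \<noteq> 0" by (auto intro: ccontr)
  have "es ! i < c" if i: "i < n" "(Q\<^sup>T *\<^sub>v x) $ i \<noteq> 0" for i
  proof (rule ccontr)
    assume "\<not> es ! i < c"
    then have "i \<in> set K" unfolding K_def using i by auto
    moreover have "(Q\<^sup>T *\<^sub>v x) $ i = (L\<^sup>T *\<^sub>v col Q i) \<bullet> z"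
      unfolding x_def using transpose_vec_mult_scalar[of L n s z "col Q i"] L z Q i by simp
    ultimately show False using orth i unfolding fs_def by simp
  qed
  then have "x \<bullet> (A *\<^sub>v x) < c * (x \<bullet> x)"
    unfolding form[OF x] using sum_weighted_squares_less[OF nonzero] by blast
  then show False using ge[OF z(1)] unfolding x_def by simp
qed

lemma card_eigs_gt_if_quadratic_form_le:
  fixes A L :: "real mat"
  assumes A: "A \<in> carrier_mat n n" and sym: "A\<^sup>T = A" and L: "L \<in> carrier_mat n s"
    and le: "\<And>x. x \<in> carrier_vec n \<Longrightarrow> L\<^sup>T *\<^sub>v x = 0\<^sub>v s \<Longrightarrow> x \<bullet> (A *\<^sub>v x) \<le> c * (x \<bullet> x)"
  shows "length (filter (\<lambda>e. c < e) (eigs_desc A)) \<le> s"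
proof (rule ccontr)
  obtain Q es where Q: "Q \<in> carrier_mat n n" "Q\<^sup>T * Q = 1\<^sub>m n" and "length es = n"
    and count: "\<And>P. length (filter P (eigs_desc A)) = length (filter (\<lambda>i. P (es ! i)) [0..<n])"
    and form: "\<And>x. x \<in> carrier_vec n \<Longrightarrow> x \<bullet> (A *\<^sub>v x) = (\<Sum>i<n. es ! i * ((Q\<^sup>T *\<^sub>v x) $ i)\<^sup>2)"
      "\<And>x. x \<in> carrier_vec n \<Longrightarrow> x \<bullet> x = (\<Sum>i<n. ((Q\<^sup>T *\<^sub>v x) $ i)\<^sup>2)"
    using symmetric_spectral_form[OF A sym] by blast
  define K where "K = filter (\<lambda>i. \<not> c < es ! i) [0..<n]"
  define fs where "fs = map (\<lambda>j. Q\<^sup>T *\<^sub>v col L j) [0..<s] @ map (unit_vec n) K"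
  assume "\<not> ?thesis"
  then have "length fs < n"
    using sum_length_filter_compl[of "\<lambda>i. c < es ! i" "[0..<n]"] unfolding fs_def K_def count by simp
  moreover have "set fs \<subseteq> carrier_vec n" unfolding fs_def using Q by (auto intro!: carrier_vecI)
  ultimately obtain y where y: "y \<in> carrier_vec n" "y \<noteq> 0\<^sub>v n" and orth: "\<forall>f \<in> set fs. f \<bullet> y = 0"
    using exists_nonzero_orthogonal_vec[of fs n] by blast
  define x where "x = Q *\<^sub>v y"
  have x: "x \<in> carrier_vec n" unfolding x_def using Q y by simp
  have y_x: "Q\<^sup>T *\<^sub>v x = y" unfolding x_def using Q y by (simp add: assoc_mult_mat_vec[symmetric, of _ n n])
  have "col L j \<bullet> x = (Q\<^sup>T *\<^sub>v col L j) \<bullet> y" if "j < s" for j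
    unfolding x_def using transpose_vec_mult_scalar[of Q n n y "col L j"] L Q y that by simp
  then have "L\<^sup>T *\<^sub>v x = 0\<^sub>v s" using orth L by (intro eq_vecI) (auto simp: fs_def)
  then have "x \<bullet> (A *\<^sub>v x) \<le> c * (x \<bullet> x)" using le x by blast
  moreover have "(\<Sum>i<n. (- es ! i) * (y $ i)\<^sup>2) < (- c) * (\<Sum>i<n. (y $ i)\<^sup>2)"
  proof (rule sum_weighted_squares_less)
    show "\<exists>i<n. y $ i \<noteq> 0" using y by (metis eq_vecI carrier_vecD index_zero_vec)
    show "- es ! i < - c" if i: "i < n" "y $ i \<noteq> 0" for i
    proof (rule ccontr)
      assume "\<not> - es ! i < - c"
      then have "unit_vec n i \<in> set fs" unfolding fs_def K_def using i by auto
      then have "unit_vec n i \<bullet> y = 0" using orth by blast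
      then show False using i y by simp
    qed
  qed
  ultimately show False unfolding form[OF x] y_x by (simp add: sum_negf sum_distrib_left)
qed

lemma sorted_desc_nth_ge:
  fixes xs :: "'a :: linorder list"
  assumes sorted: "sorted_wrt (\<ge>) xs" and j: "j < length (filter (\<lambda>e. c \<le> e) xs)"
  shows "c \<le> xs ! j"
proof (rule ccontr)
  assume below: "\<not> c \<le> xs ! j"
  have "i < j" if "i < length xs" "c \<le> xs ! i" for i
  proof (rule ccontr)
    assume "\<not> i < j"
    then have "xs ! i \<le> xs ! j" using sorted_wrt_nth_less[OF sorted, of j i] that(1) by (cases "i = j") auto
    then show False using that(2) below by simp
  qed
  then have "{i. i < length xs \<and> c \<le> xs ! i} \<subseteq> {..<j}" by auto
  then have "length (filter (\<lambda>e. c \<le> e) xs) \<le> j"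
    unfolding length_filter_conv_card by (metis card_lessThan card_mono finite_lessThan)
  then show False using j by simp
qed

lemma sorted_desc_nth_le:
  fixes xs :: "'a :: linorder list"
  assumes sorted: "sorted_wrt (\<ge>) xs" and count: "length (filter (\<lambda>e. c < e) xs) \<le> j"
    and j: "j < length xs"
  shows "xs ! j \<le> c"
proof (rule ccontr)
  assume above: "\<not> xs ! j \<le> c"
  have "c < xs ! i" if "i \<le> j" for i
    using sorted_wrt_nth_less[OF sorted, of i j] that j above by (cases "i = j") auto
  then have "{..j} \<subseteq> {i. i < length xs \<and> c < xs ! i}" using j by auto
  then have "Suc j \<le> length (filter (\<lambda>e. c < e) xs)"
    unfolding length_filter_conv_card by (metis card_atMost card_mono finite_Collect_conjI
        finite_Collect_less_nat)
  then show False using count by simp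
qed

lemma sorted_eigs_desc: "sorted_wrt (\<ge>) (eigs_desc A)"
  unfolding eigs_desc_def by (simp add: sorted_wrt_rev)

lemma lambda_ge_if_quadratic_form_ge:
  fixes A L :: "real mat"
  assumes A: "A \<in> carrier_mat n n" and sym: "A\<^sup>T = A" and L: "L \<in> carrier_mat n s" and inj: "inj_mat L"
    and ge: "\<And>z. z \<in> carrier_vec s \<Longrightarrow> c * ((L *\<^sub>v z) \<bullet> (L *\<^sub>v z)) \<le> (L *\<^sub>v z) \<bullet> (A *\<^sub>v (L *\<^sub>v z))"
    and j: "j \<in> {1..s}"
  shows "c \<le> lambda j A"
  unfolding lambda_def using j card_eigs_ge_if_quadratic_form_ge[OF A sym L inj ge]
  by (intro sorted_desc_nth_ge[OF sorted_eigs_desc]) auto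

lemma lambda_le_if_quadratic_form_le:
  fixes A L :: "real mat"
  assumes A: "A \<in> carrier_mat n n" and sym: "A\<^sup>T = A" and L: "L \<in> carrier_mat n s"
    and le: "\<And>x. x \<in> carrier_vec n \<Longrightarrow> L\<^sup>T *\<^sub>v x = 0\<^sub>v s \<Longrightarrow> x \<bullet> (A *\<^sub>v x) \<le> c * (x \<bullet> x)"
    and j: "s < j" "j \<le> n"
  shows "lambda j A \<le> c"
  unfolding lambda_def using j card_eigs_gt_if_quadratic_form_le[OF A sym L le] length_eigs_desc[OF A sym]
  by (intro sorted_desc_nth_le[OF sorted_eigs_desc]) auto

section \<open>Weighted averages of projections\<close>

lemma weighted_average_le:
  fixes a w :: "'k \<Rightarrow> real"
  assumes "0 < w0" "\<And>k. k \<in> K \<Longrightarrow> 0 \<le> w k" "a0 \<le> b" "\<And>k. k \<in> K \<Longrightarrow> a k \<le> b"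
  shows "(w0 * a0 + (\<Sum>k\<in>K. w k * a k)) / (w0 + (\<Sum>k\<in>K. w k)) \<le> b"
proof -
  have "w0 * a0 + (\<Sum>k\<in>K. w k * a k) \<le> w0 * b + (\<Sum>k\<in>K. w k * b)"
    using assms by (intro add_mono sum_mono mult_left_mono) auto
  moreover have "0 < w0 + (\<Sum>k\<in>K. w k)" using assms by (simp add: add_pos_nonneg sum_nonneg)
  ultimately show ?thesis by (simp add: divide_le_eq sum_distrib_left sum_distrib_right algebra_simps)
qed

lemma weighted_average_ge:
  fixes a w :: "'k \<Rightarrow> real"
  assumes "0 < w0" "\<And>k. k \<in> K \<Longrightarrow> 0 \<le> w k" "b \<le> a0" "\<And>k. k \<in> K \<Longrightarrow> b \<le> a k"
  shows "b \<le> (w0 * a0 + (\<Sum>k\<in>K. w k * a k)) / (w0 + (\<Sum>k\<in>K. w k))"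
proof -
  have "w0 * b + (\<Sum>k\<in>K. w k * b) \<le> w0 * a0 + (\<Sum>k\<in>K. w k * a k)"
    using assms by (intro add_mono sum_mono mult_left_mono) auto
  moreover have "0 < w0 + (\<Sum>k\<in>K. w k)" using assms by (simp add: add_pos_nonneg sum_nonneg)
  ultimately show ?thesis by (simp add: le_divide_eq sum_distrib_left sum_distrib_right algebra_simps)
qed

lemma quadratic_form_weighted_average:
  assumes K: "finite K" and M0: "M0 \<in> carrier_mat N N" and M: "\<And>k. k \<in> K \<Longrightarrow> M k \<in> carrier_mat N N"
    and x: "x \<in> carrier_vec N"
  shows "x \<bullet> (((1 / (w0 + (\<Sum>k\<in>K. w k))) \<cdot>\<^sub>m (w0 \<cdot>\<^sub>m M0 + wsum N K w M)) *\<^sub>v x)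
    = (w0 * (x \<bullet> (M0 *\<^sub>v x)) + (\<Sum>k\<in>K. w k * (x \<bullet> (M k *\<^sub>v x)))) / (w0 + (\<Sum>k\<in>K. w k))"
  using M0 x by (simp add: quadratic_form_smult[of _ N] quadratic_form_add[of _ N] wsum_carrier
      quadratic_form_wsum[OF K M x])

lemma transpose_weighted_average:
  assumes M0: "M0 \<in> carrier_mat N N" "M0\<^sup>T = M0"
    and M: "\<And>k. k \<in> K \<Longrightarrow> M k \<in> carrier_mat N N" "\<And>k. k \<in> K \<Longrightarrow> (M k)\<^sup>T = M k"
  shows "(c \<cdot>\<^sub>m (w0 \<cdot>\<^sub>m M0 + wsum N K w M))\<^sup>T = c \<cdot>\<^sub>m (w0 \<cdot>\<^sub>m M0 + wsum N K w M)"
proof -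
  have sym: "X $$ (j, i) = X $$ (i, j)"
    if "X \<in> carrier_mat N N" "X\<^sup>T = X" "i < N" "j < N" for X :: "real mat" and i j
    using that by (metis carrier_matD index_transpose_mat(1))
  have "(wsum N K w M)\<^sup>T = wsum N K w M" using M by (rule transpose_wsum)
  then show ?thesis using M0 wsum_carrier[of N K w M]
    by (intro eq_matI) (auto simp: sym[OF M0] sym[of "wsum N K w M"])
qed

(* In the notation of the paper, L is Lambda_w^(0), R0 the projection onto Lambda_s^(0), and
   P k, R k the projections onto Lambda_T^(k), Lambda_Tc^(k); only P k + R k must be a projection. *)
locale weighted_projections =
  fixes N s :: nat and \<A> :: "'k set" and T0 :: real and Tk :: "'k \<Rightarrow> real"
    and L R0 :: "real mat" and P R :: "'k \<Rightarrow> real mat" and \<epsilon> \<kappa> :: real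
  assumes finite_index: "finite \<A>" and T0_pos: "0 < T0" and Tk_pos: "\<And>k. k \<in> \<A> \<Longrightarrow> 0 < Tk k"
    and L: "L \<in> carrier_mat N s" and inj_L: "inj_mat L"
    and R0: "orth_proj_mat N R0" and proj_L_R0: "orth_proj_mat N (proj L + R0)"
    and P: "\<And>k. k \<in> \<A> \<Longrightarrow> P k \<in> carrier_mat N N"
    and R: "\<And>k. k \<in> \<A> \<Longrightarrow> orth_proj_mat N (R k)"
    and P_R: "\<And>k. k \<in> \<A> \<Longrightarrow> orth_proj_mat N (P k + R k)"
    and eps_nonneg: "0 \<le> \<epsilon>" and P_close: "\<And>k. k \<in> \<A> \<Longrightarrow> frob_norm (P k - proj L) \<le> \<epsilon>"
    and R_bound: "spec_norm ((1 / (T0 + (\<Sum>k\<in>\<A>. Tk k))) \<cdot>\<^sub>m (T0 \<cdot>\<^sub>m R0 + wsum N \<A> Tk R)) \<le> 1 - \<kappa>"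
begin

abbreviation T :: real where
  "T \<equiv> T0 + (\<Sum>k\<in>\<A>. Tk k)"

abbreviation Pw :: "real mat" where
  "Pw \<equiv> (1 / T) \<cdot>\<^sub>m (T0 \<cdot>\<^sub>m (proj L + R0) + wsum N \<A> Tk (\<lambda>k. P k + R k))"

lemma Tk_nonneg: "k \<in> \<A> \<Longrightarrow> 0 \<le> Tk k"
  using Tk_pos by (simp add: less_imp_le)

lemma proj_L: "orth_proj_mat N (proj L)"
  by (rule orth_proj_mat_proj[OF L inj_L])

lemma carriers:
  "proj L \<in> carrier_mat N N" "R0 \<in> carrier_mat N N"
  "k \<in> \<A> \<Longrightarrow> R k \<in> carrier_mat N N" "k \<in> \<A> \<Longrightarrow> P k + R k \<in> carrier_mat N N"
  using proj_L R0 R P_R unfolding orth_proj_mat_def by auto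

lemma Pw_carrier: "Pw \<in> carrier_mat N N"
  using carriers by (simp add: wsum_carrier)

lemma Pw_symmetric: "Pw\<^sup>T = Pw"
  using proj_L_R0 P_R unfolding orth_proj_mat_def by (intro transpose_weighted_average) auto

lemma quadratic_form_Pw:
  assumes x: "x \<in> carrier_vec N"
  shows "x \<bullet> (Pw *\<^sub>v x) = (T0 * (x \<bullet> ((proj L + R0) *\<^sub>v x))
    + (\<Sum>k\<in>\<A>. Tk k * (x \<bullet> ((P k + R k) *\<^sub>v x)))) / T"
  using carriers x by (intro quadratic_form_weighted_average finite_index) auto

lemma quadratic_form_Pw_le: "x \<in> carrier_vec N \<Longrightarrow> x \<bullet> (Pw *\<^sub>v x) \<le> x \<bullet> x"
  unfolding quadratic_form_Pw using T0_pos Tk_nonneg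
    quadratic_form_orth_proj_mat(2)[OF proj_L_R0] quadratic_form_orth_proj_mat(2)[OF P_R]
  by (intro weighted_average_le) auto

lemma quadratic_form_Pw_range:
  assumes z: "z \<in> carrier_vec s"
  shows "(1 - \<epsilon>) * ((L *\<^sub>v z) \<bullet> (L *\<^sub>v z)) \<le> (L *\<^sub>v z) \<bullet> (Pw *\<^sub>v (L *\<^sub>v z))"
proof -
  define x where "x = L *\<^sub>v z"
  have x: "x \<in> carrier_vec N" unfolding x_def using L z by simp
  have "proj L *\<^sub>v x = x"
    unfolding x_def using proj_mult_self[OF L inj_L] L z carriers by (metis assoc_mult_mat_vec)
  then have proj_x: "x \<bullet> (proj L *\<^sub>v x) = x \<bullet> x" by simp
  have "(1 - \<epsilon>) * (x \<bullet> x) \<le> x \<bullet> x"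
    using mult_nonneg_nonneg[OF eps_nonneg scalar_prod_self_nonneg[of x]] by (simp add: algebra_simps)
  also have "\<dots> \<le> x \<bullet> ((proj L + R0) *\<^sub>v x)"
    using proj_x quadratic_form_orth_proj_mat(1)[OF R0 x] carriers x by (simp add: quadratic_form_add)
  finally have "(1 - \<epsilon>) * (x \<bullet> x) \<le> x \<bullet> ((proj L + R0) *\<^sub>v x)" .
  moreover have "(1 - \<epsilon>) * (x \<bullet> x) \<le> x \<bullet> ((P k + R k) *\<^sub>v x)" if k: "k \<in> \<A>" for k
  proof -
    have "\<bar>x \<bullet> ((P k - proj L) *\<^sub>v x)\<bar> \<le> frob_norm (P k - proj L) * (x \<bullet> x)"
      using P[OF k] carriers x by (intro abs_quadratic_form_le_frob_norm) auto
    also have "\<dots> \<le> \<epsilon> * (x \<bullet> x)"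
      using P_close[OF k] scalar_prod_self_nonneg[of x] by (intro mult_right_mono) auto
    finally have "(1 - \<epsilon>) * (x \<bullet> x) \<le> x \<bullet> (P k *\<^sub>v x)"
      using quadratic_form_diff[OF P[OF k] _ x] carriers proj_x by (simp add: algebra_simps abs_le_iff)
    then show ?thesis using quadratic_form_orth_proj_mat(1)[OF R[OF k] x] P[OF k] carriers k x
      by (simp add: quadratic_form_add)
  qed
  ultimately show ?thesis
    unfolding x_def[symmetric] quadratic_form_Pw[OF x] using T0_pos Tk_nonneg
    by (intro weighted_average_ge) auto
qed

lemma quadratic_form_Pw_kernel:
  assumes x: "x \<in> carrier_vec N" and Lx: "L\<^sup>T *\<^sub>v x = 0\<^sub>v s"
  shows "x \<bullet> (Pw *\<^sub>v x) \<le> (1 - \<kappa> + \<epsilon>) * (x \<bullet> x)"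
proof -
  have proj_x: "x \<bullet> (proj L *\<^sub>v x) = 0" using proj_mult_vec_eq_0[OF L inj_L x Lx] x by simp
  have "x \<bullet> (P k *\<^sub>v x) \<le> \<epsilon> * (x \<bullet> x)" if k: "k \<in> \<A>" for k
  proof -
    have "x \<bullet> (P k *\<^sub>v x) = x \<bullet> ((P k - proj L) *\<^sub>v x)"
      using quadratic_form_diff[OF P[OF k] carriers(1) x] proj_x by simp
    also have "\<dots> \<le> frob_norm (P k - proj L) * (x \<bullet> x)"
      using P[OF k] carriers(1) x by (intro abs_le_D1[OF abs_quadratic_form_le_frob_norm]) auto
    also have "\<dots> \<le> \<epsilon> * (x \<bullet> x)"
      using P_close[OF k] scalar_prod_self_nonneg[of x] by (intro mult_right_mono) auto
    finally show ?thesis .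
  qed
  then have weak: "(T0 * (x \<bullet> (proj L *\<^sub>v x)) + (\<Sum>k\<in>\<A>. Tk k * (x \<bullet> (P k *\<^sub>v x)))) / T \<le> \<epsilon> * (x \<bullet> x)"
    using T0_pos Tk_nonneg proj_x eps_nonneg scalar_prod_self_nonneg[of x]
    by (intro weighted_average_le) auto
  have "(T0 * (x \<bullet> (R0 *\<^sub>v x)) + (\<Sum>k\<in>\<A>. Tk k * (x \<bullet> (R k *\<^sub>v x)))) / T
      = x \<bullet> (((1 / T) \<cdot>\<^sub>m (T0 \<cdot>\<^sub>m R0 + wsum N \<A> Tk R)) *\<^sub>v x)"
    using carriers(2,3) x by (intro quadratic_form_weighted_average[symmetric] finite_index) auto
  also have "\<dots> \<le> spec_norm ((1 / T) \<cdot>\<^sub>m (T0 \<cdot>\<^sub>m R0 + wsum N \<A> Tk R)) * (x \<bullet> x)"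
    using carriers(2) x by (intro quadratic_form_le_spec_norm) (auto simp: wsum_carrier)
  also have "\<dots> \<le> (1 - \<kappa>) * (x \<bullet> x)"
    using R_bound scalar_prod_self_nonneg[of x] by (intro mult_right_mono) auto
  finally have strong: "(T0 * (x \<bullet> (R0 *\<^sub>v x)) + (\<Sum>k\<in>\<A>. Tk k * (x \<bullet> (R k *\<^sub>v x)))) / T
      \<le> (1 - \<kappa>) * (x \<bullet> x)" .
  have "x \<bullet> ((proj L + R0) *\<^sub>v x) = x \<bullet> (proj L *\<^sub>v x) + x \<bullet> (R0 *\<^sub>v x)"
    by (rule quadratic_form_add[OF carriers(1,2) x])
  moreover have "x \<bullet> ((P k + R k) *\<^sub>v x) = x \<bullet> (P k *\<^sub>v x) + x \<bullet> (R k *\<^sub>v x)" if "k \<in> \<A>" for k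
    by (rule quadratic_form_add[OF P[OF that] carriers(3)[OF that] x])
  ultimately have "x \<bullet> (Pw *\<^sub>v x)
      = (T0 * (x \<bullet> (proj L *\<^sub>v x)) + (\<Sum>k\<in>\<A>. Tk k * (x \<bullet> (P k *\<^sub>v x)))) / T
      + (T0 * (x \<bullet> (R0 *\<^sub>v x)) + (\<Sum>k\<in>\<A>. Tk k * (x \<bullet> (R k *\<^sub>v x)))) / T"
    unfolding quadratic_form_Pw[OF x] by (simp add: add_divide_distrib distrib_left sum.distrib)
  then show ?thesis using add_mono[OF weak strong] by (simp add: algebra_simps)
qed

theorem eigenvalue_bounds:
  shows "\<forall>j\<in>{1..s}. \<bar>lambda j Pw - 1\<bar> \<le> \<epsilon>"
    and "s < N \<Longrightarrow> lambda (s + 1) Pw \<le> 1 - \<kappa> + \<epsilon>"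
proof -
  show "\<forall>j\<in>{1..s}. \<bar>lambda j Pw - 1\<bar> \<le> \<epsilon>"
  proof
    fix j assume j: "j \<in> {1..s}"
    have "lambda j Pw \<le> 1"
      using quadratic_form_Pw_le j inj_mat_dim_le[OF L inj_L]
      by (intro lambda_le_if_quadratic_form_le[OF Pw_carrier Pw_symmetric, of "0\<^sub>m N 0"]) auto
    moreover have "1 - \<epsilon> \<le> lambda j Pw"
      using quadratic_form_Pw_range j by (intro lambda_ge_if_quadratic_form_ge[OF Pw_carrier Pw_symmetric L inj_L])
    ultimately show "\<bar>lambda j Pw - 1\<bar> \<le> \<epsilon>" by simp
  qed
  show "s < N \<Longrightarrow> lambda (s + 1) Pw \<le> 1 - \<kappa> + \<epsilon>"
    using quadratic_form_Pw_kernel by (intro lambda_le_if_quadratic_form_le[OF Pw_carrier Pw_symmetric L]) auto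
qed

end

theorem theorem4:
  fixes s r0 :: nat and r :: "'k \<Rightarrow> nat" and \<A> :: "'k set" and \<kappa> :: real
  assumes "finite \<A>" and "\<kappa> > 0" and "s \<le> r0" and "\<forall>k\<in>\<A>. s \<le> r k"
  shows "\<exists>C>0. \<forall>(N::nat) (T0::real) (Tk::'k \<Rightarrow> real) (Lw0::real mat) (Ls0::real mat)
            (LT::'k \<Rightarrow> real mat) (LTc::'k \<Rightarrow> real mat) (\<epsilon>::real).
      ( T0 > 0 \<and> (\<forall>k\<in>\<A>. Tk k > 0)
      \<and> Lw0 \<in> carrier_mat N s \<and> Ls0 \<in> carrier_mat N (r0 - s)
      \<and> full_col_rank (four_block_mat Lw0 Ls0 (0\<^sub>m 0 s) (0\<^sub>m 0 (r0 - s)))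
      \<and> Lw0\<^sup>T * Ls0 = 0\<^sub>m s (r0 - s)
      \<and> (\<forall>k\<in>\<A>. LT k \<in> carrier_mat N s \<and> LTc k \<in> carrier_mat N (r k - s)
            \<and> full_col_rank (four_block_mat (LT k) (LTc k) (0\<^sub>m 0 s) (0\<^sub>m 0 (r k - s)))
            \<and> (LT k)\<^sup>T * LTc k = 0\<^sub>m s (r k - s))
      \<and> 0 \<le> \<epsilon>
      \<and> (\<forall>k\<in>\<A>. frob_norm (proj (LT k) - proj Lw0) \<le> \<epsilon>)
      \<and> (let T = T0 + (\<Sum>k\<in>\<A>. Tk k) in
           spec_norm ((1 / T) \<cdot>\<^sub>m (T0 \<cdot>\<^sub>m proj Ls0 + wsum N \<A> Tk (\<lambda>k. proj (LTc k)))) \<le> 1 - \<kappa>) )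
      \<longrightarrow>
      (let T = T0 + (\<Sum>k\<in>\<A>. Tk k);
           Pw = (1 / T) \<cdot>\<^sub>m (T0 \<cdot>\<^sub>m (proj Lw0 + proj Ls0)
                   + wsum N \<A> Tk (\<lambda>k. proj (LT k) + proj (LTc k)))
       in (\<forall>j\<in>{1..s}. \<bar>lambda j Pw - 1\<bar> \<le> C * \<epsilon>)
          \<and> (s < N \<longrightarrow> lambda (s + 1) Pw \<le> 1 - \<kappa> + C * \<epsilon>))"
proof (intro exI[of _ "1::real"] conjI allI impI, goal_cases)
  case 1
  show ?case by simp
next
  case (2 N T0 Tk Lw0 Ls0 LT LTc \<epsilon>)
  note H = 2[unfolded Let_def]
  have target: "inj_mat Lw0" "orth_proj_mat N (proj Ls0)" "orth_proj_mat N (proj Lw0 + proj Ls0)"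
    using orth_proj_mats_of_orthogonal_blocks[of Lw0 N s Ls0 "r0 - s"] H by auto
  have source: "orth_proj_mat N (proj (LT k))" "orth_proj_mat N (proj (LTc k))"
    "orth_proj_mat N (proj (LT k) + proj (LTc k))" if "k \<in> \<A>" for k
    using orth_proj_mats_of_orthogonal_blocks[of "LT k" N s "LTc k" "r k - s"] H that by auto
  interpret weighted_projections N s \<A> T0 Tk Lw0 "proj Ls0" "\<lambda>k. proj (LT k)" "\<lambda>k. proj (LTc k)" \<epsilon> \<kappa>
    using H target source assms(1) by unfold_locales (auto simp: orth_proj_mat_def)
  show ?case using eigenvalue_bounds by (simp add: Let_def)
qed

end
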